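(* Let $A$ be a Noetherian integral domain and let $B$ be an overring of $A$ that is well-centered on $A$. Then $B$ is Noetherian.
   Context: An overring of $A$ is a subring of the field of fractions of $A$ containing $A$. $B$ is well-centered on $A$ if for each $b\in B$ there is a unit $u$ of $B$ with $ub\in A$. *)

theory Defs
  imports "HOL-Algebra.Algebra"
begin

definition fraction_field_of :: "('a, 'b) ring_scheme \<Rightarrow> 'a set \<Rightarrow> bool" where
  "fraction_field_of K A \<longleftrightarrow> field K \<and> subring A K \<and>
     (\<forall>x \<in> carrier K. \<exists>a \<in> A. \<exists>s \<in> A. s \<noteq> \<zero>\<^bsub>K\<^esub> \<and> x = a \<otimes>\<^bsub>K\<^esub> inv\<^bsub>K\<^esub> s)"

definition overring :: "('a, 'b) ring_scheme \<Rightarrow> 'a set \<Rightarrow> 'a set \<Rightarrow> bool" where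
  "overring K A B \<longleftrightarrow> fraction_field_of K A \<and> subring B K \<and> A \<subseteq> B"

definition well_centered :: "('a, 'b) ring_scheme \<Rightarrow> 'a set \<Rightarrow> 'a set \<Rightarrow> bool" where
  "well_centered K A B \<longleftrightarrow>
     (\<forall>b \<in> B. \<exists>u \<in> Units (K\<lparr>carrier := B\<rparr>). u \<otimes>\<^bsub>K\<^esub> b \<in> A)"

end

theory Submission
  imports Defs
begin

text \<open>If every element of B is a unit of B times an element of A, then every ideal J of B
  is generated by its contraction J \<inter> A, and a finite set generating J \<inter> A as an ideal
  of A generates J as an ideal of B.\<close>

lemma (in ring) ideal_Int_subring:
  assumes S: "subring S R" and I: "ideal I R"
  shows "ideal (I \<inter> S) (R\<lparr>carrier := S\<rparr>)"
proof (rule idealI)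
  show "ring (R\<lparr>carrier := S\<rparr>)"
    using subring_is_ring[OF S] .
  have "subgroup I (add_monoid R)"
    using I ideal.axioms(1) additive_subgroup.a_subgroup by blast
  then have "subgroup (I \<inter> S) (add_monoid R)"
    using add.subgroups_Inter_pair subring.axioms(1)[OF S] by blast
  then have "subgroup (I \<inter> S) ((add_monoid R)\<lparr>carrier := S\<rparr>)"
    using add.subgroup_incl subring.axioms(1)[OF S] by blast
  then show "subgroup (I \<inter> S) (add_monoid (R\<lparr>carrier := S\<rparr>))"
    by simp
next
  fix a x assume "a \<in> I \<inter> S" and "x \<in> carrier (R\<lparr>carrier := S\<rparr>)"
  then show "x \<otimes>\<^bsub>R\<lparr>carrier := S\<rparr>\<^esub> a \<in> I \<inter> S"
    using ideal.I_l_closed[OF I] subringE(1,6)[OF S] by auto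
next
  fix a x assume "a \<in> I \<inter> S" and "x \<in> carrier (R\<lparr>carrier := S\<rparr>)"
  then show "a \<otimes>\<^bsub>R\<lparr>carrier := S\<rparr>\<^esub> x \<in> I \<inter> S"
    using ideal.I_r_closed[OF I] subringE(1,6)[OF S] by auto
qed

lemma (in ring) genideal_genideal_subring:
  assumes S: "subring S R" and F: "F \<subseteq> S"
  shows "Idl (Idl\<^bsub>R\<lparr>carrier := S\<rparr>\<^esub> F) = Idl F"
proof -
  interpret T: ring "R\<lparr>carrier := S\<rparr>"
    using subring_is_ring[OF S] .
  have FR: "F \<subseteq> carrier R"
    using F subringE(1)[OF S] by blast
  have "Idl\<^bsub>R\<lparr>carrier := S\<rparr>\<^esub> F \<subseteq> Idl F \<inter> S"
    using T.genideal_minimal[OF ideal_Int_subring[OF S genideal_ideal[OF FR]]]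
      genideal_self[OF FR] F by auto
  then have "Idl (Idl\<^bsub>R\<lparr>carrier := S\<rparr>\<^esub> F) \<subseteq> Idl F"
    using genideal_minimal[OF genideal_ideal[OF FR]] by blast
  moreover have "Idl F \<subseteq> Idl (Idl\<^bsub>R\<lparr>carrier := S\<rparr>\<^esub> F)"
  proof (rule subset_Idl_subset)
    have "ideal (Idl\<^bsub>R\<lparr>carrier := S\<rparr>\<^esub> F) (R\<lparr>carrier := S\<rparr>)"
      using T.genideal_ideal F by simp
    then show "Idl\<^bsub>R\<lparr>carrier := S\<rparr>\<^esub> F \<subseteq> carrier R"
      using ideal.Icarr subringE(1)[OF S] by force
    show "F \<subseteq> Idl\<^bsub>R\<lparr>carrier := S\<rparr>\<^esub> F"
      using T.genideal_self F by simp
  qed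
  ultimately show ?thesis by blast
qed

lemma (in ring) ideal_eq_genideal_Int_subring:
  assumes S: "subring S R"
    and units_times_S: "\<And>b. b \<in> carrier R \<Longrightarrow> \<exists>u \<in> Units R. u \<otimes> b \<in> S"
    and J: "ideal J R"
  shows "J = Idl (J \<inter> S)"
proof
  show "Idl (J \<inter> S) \<subseteq> J"
    using genideal_minimal[OF J] by blast
next
  have JS: "J \<inter> S \<subseteq> carrier R"
    using ideal.Icarr[OF J] by blast
  show "J \<subseteq> Idl (J \<inter> S)"
  proof
    fix b assume b: "b \<in> J"
    have bR: "b \<in> carrier R"
      using ideal.Icarr[OF J b] .
    then obtain u where u: "u \<in> Units R" and ub: "u \<otimes> b \<in> S"
      using units_times_S by blast
    have "u \<otimes> b \<in> J"
      using ideal.I_l_closed[OF J b] u by blast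
    with ub have "u \<otimes> b \<in> Idl (J \<inter> S)"
      using genideal_self[OF JS] by blast
    then have "inv u \<otimes> (u \<otimes> b) \<in> Idl (J \<inter> S)"
      using ideal.I_l_closed[OF genideal_ideal[OF JS]] u by blast
    moreover have "inv u \<otimes> (u \<otimes> b) = b"
      using u bR by (metis Units_closed Units_inv_closed Units_l_inv l_one m_assoc)
    ultimately show "b \<in> Idl (J \<inter> S)"
      by simp
  qed
qed

lemma (in ring) noetherian_ring_if_units_times_noetherian_subring:
  assumes S: "subring S R"
    and noeth: "noetherian_ring (R\<lparr>carrier := S\<rparr>)"
    and units_times_S: "\<And>b. b \<in> carrier R \<Longrightarrow> \<exists>u \<in> Units R. u \<otimes> b \<in> S"
  shows "noetherian_ring R"
proof (rule noetherian_ringI)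
  fix J assume J: "ideal J R"
  obtain F where F: "F \<subseteq> S" "finite F" and JS: "J \<inter> S = Idl\<^bsub>R\<lparr>carrier := S\<rparr>\<^esub> F"
    using noetherian_ring.finetely_gen[OF noeth ideal_Int_subring[OF S J]] by auto
  have "J = Idl F"
    using ideal_eq_genideal_Int_subring[OF S units_times_S J] JS
      genideal_genideal_subring[OF S F(1)] by simp
  then show "\<exists>F \<subseteq> carrier R. finite F \<and> J = Idl F"
    using F subringE(1)[OF S] by blast
qed

theorem proposition3p1:
  fixes K :: "('a, 'b) ring_scheme" and A B :: "'a set"
  assumes "noetherian_domain (K\<lparr>carrier := A\<rparr>)"
    and "overring K A B"
    and "well_centered K A B"
  shows "noetherian_ring (K\<lparr>carrier := B\<rparr>)"
proof -
  have "ring K" and A: "subring A K" and B: "subring B K" and "A \<subseteq> B"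
    using assms(2) field.is_ring unfolding overring_def fraction_field_of_def by auto
  interpret K: ring K by fact
  interpret R: ring "K\<lparr>carrier := B\<rparr>"
    using K.subring_is_ring[OF B] .
  have "subring A (K\<lparr>carrier := B\<rparr>)"
    using R.ring_incl_imp_subring K.subring_is_ring[OF A] \<open>A \<subseteq> B\<close> by simp
  moreover have "noetherian_ring ((K\<lparr>carrier := B\<rparr>)\<lparr>carrier := A\<rparr>)"
    using assms(1) noetherian_domain.axioms(1) by simp
  moreover have "\<exists>u \<in> Units (K\<lparr>carrier := B\<rparr>). u \<otimes>\<^bsub>K\<lparr>carrier := B\<rparr>\<^esub> b \<in> A"
    if "b \<in> carrier (K\<lparr>carrier := B\<rparr>)" for b
    using assms(3) that unfolding well_centered_def by simp
  ultimately show ?thesis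
    by (rule R.noetherian_ring_if_units_times_noetherian_subring)
qed

end
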